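(* For nonnegative integers $i$ and $k$, $$\binom{i+k}{2k}_q=\binom{i}{k}_q+\sum_{r=1}^kq^{k+r}\binom{i+r-1}{k+r}_q.$$
   Context: For nonnegative integers $n$, $[n]!_q=\prod_{j=1}^n\frac{1-q^j}{1-q}$ (with $[0]!_q=1$), and for integers $0\le k\le n$, $\binom{n}{k}_q=\frac{[n]!_q}{[k]!_q[n-k]!_q}$ (Gaussian polynomial); set $\binom{n}{k}_q=0$ if $k<0$ or $k>n$. *)

theory Defs
  imports "HOL-Computational_Algebra.Polynomial"
begin

text \<open>q-integers, q-factorials and Gaussian polynomials as polynomials in q
  (the indeterminate), over an arbitrary field; all divisions are exact
  polynomial divisions.\<close>

definition qint :: "nat \<Rightarrow> 'a::field poly" where
  "qint j = (1 - monom 1 j) div (1 - [:0, 1:])"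

definition qfact :: "nat \<Rightarrow> 'a::field poly" where
  "qfact n = (\<Prod>j = 1..n. qint j)"

definition qbinom :: "nat \<Rightarrow> nat \<Rightarrow> 'a::field poly" where
  "qbinom n k = (if k \<le> n then qfact n div (qfact k * qfact (n - k)) else 0)"

end

theory Submission
  imports Defs
begin

text \<open>Iterating the q-Pascal rule
  \<open>[n+1, k+1] = [n, k] + q^(k+1) [n, k+1]\<close> on the first term, m times starting from
  \<open>[i+m, k+m]\<close>, telescopes to \<open>[i+m, k+m] = [i, k] + \<Sum>r=1..m. q^(k+r) [i+r-1, k+r]\<close>;
  the theorem is the case \<open>m = k\<close>. The Pascal rule itself comes from
  \<open>[n+1]_q = [k+1]_q + q^(k+1) [n-k]_q\<close>. Since \<open>qbinom\<close> is defined by polynomial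
  division, we first show that the polynomials generated by the Pascal recursion
  satisfy \<open>[n, k] [k]! [n-k]! = [n]!\<close>, so that the division is exact and returns them.\<close>

lemma qint_eq_sum_monom: "(qint j :: 'a::field poly) = (\<Sum>i<j. monom 1 i)"
proof -
  have "(1 - monom 1 j :: 'a poly) = (\<Sum>i<j. monom 1 i) * (1 - [:0, 1:])"
  proof (induction j)
    case 0
    then show ?case by simp
  next
    case (Suc j)
    have "monom (1::'a) j * [:0, 1:] = monom 1 (Suc j)"
      by (simp add: monom_Suc)
    with Suc show ?case by (simp add: algebra_simps)
  qed
  moreover have "(1 - [:0, 1:] :: 'a poly) \<noteq> 0"
    by (metis coeff_diff coeff_pCons_0 diff_zero one_pCons one_neq_zero coeff_0 pCons_0_0)
  ultimately show ?thesis
    unfolding qint_def by simp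
qed

lemma qint_add: "(qint (k + d) :: 'a::field poly) = qint k + monom 1 k * qint d"
proof -
  have "(\<Sum>i<k + d. monom (1::'a) i) = (\<Sum>i<k. monom 1 i) + (\<Sum>i<d. monom 1 (k + i))"
    by (induction d) (simp_all add: add_ac)
  then show ?thesis
    unfolding qint_eq_sum_monom by (simp add: sum_distrib_left mult_monom)
qed

lemma qint_neq_0: "j \<ge> 1 \<Longrightarrow> (qint j :: 'a::field poly) \<noteq> 0"
proof -
  assume "j \<ge> 1"
  then have "coeff (qint j :: 'a poly) 0 = 1"
    unfolding qint_eq_sum_monom by (simp add: coeff_sum coeff_monom)
  then show ?thesis by auto
qed

lemma qfact_neq_0: "(qfact n :: 'a::field poly) \<noteq> 0"
  unfolding qfact_def by (auto simp: qint_neq_0)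

lemma qfact_0 [simp]: "qfact 0 = 1"
  by (simp add: qfact_def)

lemma qfact_Suc: "(qfact (Suc n) :: 'a::field poly) = qfact n * qint (Suc n)"
  unfolding qfact_def by (simp add: prod.nat_ivl_Suc')

fun qbinom_rec :: "nat \<Rightarrow> nat \<Rightarrow> 'a::field poly" where
  "qbinom_rec n 0 = 1"
| "qbinom_rec 0 (Suc k) = 0"
| "qbinom_rec (Suc n) (Suc k) = qbinom_rec n k + monom 1 (Suc k) * qbinom_rec n (Suc k)"

lemma qbinom_rec_eq_0: "n < k \<Longrightarrow> qbinom_rec n k = 0"
  by (induction n k rule: qbinom_rec.induct) auto

lemma qbinom_rec_mult_qfact:
  "k \<le> n \<Longrightarrow> qbinom_rec n k * qfact k * qfact (n - k) = (qfact n :: 'a::field poly)"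
proof (induction n k rule: qbinom_rec.induct)
  case (1 n)
  then show ?case by simp
next
  case (2 k)
  then show ?case by simp
next
  case (3 n k)
  have left: "qbinom_rec n k * qfact (Suc k) * qfact (n - k) = (qfact n :: 'a poly) * qint (Suc k)"
    using 3 by (simp add: qfact_Suc mult_ac)
  have right: "monom 1 (Suc k) * qbinom_rec n (Suc k) * qfact (Suc k) * qfact (n - k)
      = (qfact n :: 'a poly) * (monom 1 (Suc k) * qint (n - k))"
  proof (cases "k = n")
    case True
    then show ?thesis by (simp add: qbinom_rec_eq_0 qint_eq_sum_monom)
  next
    case False
    with 3 have "Suc k \<le> n" by simp
    then have n_minus_k: "n - k = Suc (n - Suc k)" by simp
    show ?thesis
      using "3.IH"(2)[OF \<open>Suc k \<le> n\<close>] unfolding n_minus_k qfact_Suc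
      by (simp add: mult_ac n_minus_k[symmetric])
  qed
  have "qint (Suc n) = (qint (Suc k) :: 'a poly) + monom 1 (Suc k) * qint (n - k)"
    using qint_add[of "Suc k" "n - k"] 3 by simp
  then have "(qfact (Suc n) :: 'a poly)
      = qfact n * qint (Suc k) + qfact n * (monom 1 (Suc k) * qint (n - k))"
    by (simp add: qfact_Suc algebra_simps)
  also have "\<dots> = qbinom_rec (Suc n) (Suc k) * qfact (Suc k) * qfact (Suc n - Suc k)"
    unfolding left[symmetric] right[symmetric] by (simp add: algebra_simps)
  finally show ?case by simp
qed

lemma qbinom_eq_qbinom_rec: "qbinom n k = (qbinom_rec n k :: 'a::field poly)"
proof (cases "k \<le> n")
  case True
  have "qfact n div (qfact k * qfact (n - k)) = (qbinom_rec n k :: 'a poly)"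
    using qbinom_rec_mult_qfact[OF True, where 'a='a, symmetric] qfact_neq_0[of k]
      qfact_neq_0[of "n - k"]
    by (auto simp add: mult.assoc)
  with True show ?thesis
    unfolding qbinom_def by simp
next
  case False
  then show ?thesis
    unfolding qbinom_def by (simp add: qbinom_rec_eq_0)
qed

lemma qbinom_Suc_Suc:
  "(qbinom (Suc n) (Suc k) :: 'a::field poly) = qbinom n k + monom 1 (Suc k) * qbinom n (Suc k)"
  by (simp add: qbinom_eq_qbinom_rec)

lemma qbinom_add_add_eq_sum:
  "(qbinom (i + m) (k + m) :: 'a::field poly) =
     qbinom i k + (\<Sum>r = 1..m. monom 1 (k + r) * qbinom (i + r - 1) (k + r))"
proof (induction m)
  case 0
  then show ?case by simp
next
  case (Suc m)
  have "(qbinom (i + Suc m) (k + Suc m) :: 'a poly)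
      = qbinom (i + m) (k + m) + monom 1 (k + Suc m) * qbinom (i + Suc m - 1) (k + Suc m)"
    using qbinom_Suc_Suc[of "i + m" "k + m"] by simp
  with Suc show ?case by simp
qed

theorem lemma6:
  fixes i k :: nat
  shows "(qbinom (i + k) (2 * k) :: 'a::field poly) =
           qbinom i k + (\<Sum>r = 1..k. monom 1 (k + r) * qbinom (i + r - 1) (k + r))"
  using qbinom_add_add_eq_sum[of i k k] by (simp add: mult_2)

end
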